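(* Let $\mathcal{X}$ be the graph obtained from the icosahedron graph (the 1-skeleton of the regular icosahedron; 12 vertices, 5-regular, planar) by deleting one edge $\{a,b\}$. Then the maximum size of an independent set of $\mathcal{X}$ is $4$, and both $a$ and $b$ belong to every maximum independent set of $\mathcal{X}$.
   Context: An independent set is a set of pairwise non-adjacent vertices; a maximum independent set is one of largest possible size. *)

theory Defs
  imports Main
begin

text \<open>The icosahedron graph is modelled concretely on the
vertices 0..11: vertex 0 (top), upper pentagon 1..5, lower pentagon 6..10,
vertex 11 (bottom).\<close>

definition ico_edges :: "nat set set" where
  "ico_edges = (\<Union>i\<in>{1..5::nat}.
     {{0, i}, {i, i mod 5 + 1}, {5 + i, 5 + (i mod 5 + 1)}, {11, 5 + i},
      {i, 5 + i}, {i, 5 + (i mod 5 + 1)}})"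

definition ico_vertices :: "nat set" where
  "ico_vertices = {0..11}"

definition ico_minus_adj :: "nat \<Rightarrow> nat \<Rightarrow> nat \<Rightarrow> nat \<Rightarrow> bool" where
  "ico_minus_adj a b u v \<longleftrightarrow> {u, v} \<in> ico_edges \<and> {u, v} \<noteq> {a, b}"

definition independent_set :: "'a set \<Rightarrow> ('a \<Rightarrow> 'a \<Rightarrow> bool) \<Rightarrow> 'a set \<Rightarrow> bool" where
  "independent_set V adj S \<longleftrightarrow> S \<subseteq> V \<and> (\<forall>u\<in>S. \<forall>v\<in>S. \<not> adj u v)"

definition independence_number :: "'a set \<Rightarrow> ('a \<Rightarrow> 'a \<Rightarrow> bool) \<Rightarrow> nat" where
  "independence_number V adj = Max (card ` {S. independent_set V adj S})"

definition maximum_independent_set :: "'a set \<Rightarrow> ('a \<Rightarrow> 'a \<Rightarrow> bool) \<Rightarrow> 'a set \<Rightarrow> bool" where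
  "maximum_independent_set V adj S \<longleftrightarrow>
     independent_set V adj S \<and> card S = independence_number V adj"

end

theory Submission
  imports Defs
begin

(* Deleting an edge ab raises the independence number by at most one: for an independent set S
   of the smaller graph, S - {a} and S - {b} are independent in the original graph.  A set of the
   raised size therefore contains both a and b.  The icosahedron itself has independence number 3,
   and every edge ab of it extends to an independent 4-set of the icosahedron minus ab; both facts
   are verified by exhaustive search over its adjacency lists. *)

lemma independent_set_delete_edge:
  assumes "independent_set V (\<lambda>u v. adj u v \<and> {u, v} \<noteq> {a, b}) S"
  shows "independent_set V adj (S - {a})"
  using assms unfolding independent_set_def by (auto simp: doubleton_eq_iff)

lemma card_independent_set_delete_edge:
  assumes "finite V"
    and bound: "\<And>T. independent_set V adj T \<Longrightarrow> card T \<le> k"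
    and S: "independent_set V (\<lambda>u v. adj u v \<and> {u, v} \<noteq> {a, b}) S"
  shows "card S \<le> Suc k \<and> (card S = Suc k \<longrightarrow> a \<in> S \<and> b \<in> S)"
proof -
  have "finite S"
    using S \<open>finite V\<close> unfolding independent_set_def by (auto intro: finite_subset)
  have "independent_set V (\<lambda>u v. adj u v \<and> {u, v} \<noteq> {b, a}) S"
    using S by (simp add: insert_commute)
  then have "card (S - {a}) \<le> k" "card (S - {b}) \<le> k"
    using S by (auto intro: bound independent_set_delete_edge)
  then show ?thesis
    using \<open>finite S\<close> by (auto simp: card_Diff_singleton_if split: if_splits)
qed

lemma independence_number_eqI:
  assumes "finite V" "independent_set V adj S"
    and "\<And>T. independent_set V adj T \<Longrightarrow> card T \<le> card S"
  shows "independence_number V adj = card S"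
  unfolding independence_number_def
proof (rule Max_eqI)
  have "card ` {T. independent_set V adj T} \<subseteq> card ` Pow V"
    unfolding independent_set_def by auto
  then show "finite (card ` {T. independent_set V adj T})"
    using \<open>finite V\<close> by (meson finite_Pow_iff finite_imageI finite_subset)
  show "card S \<in> card ` {T. independent_set V adj T}"
    using assms(2) by blast
qed (use assms(3) in blast)

lemma ex_mem_diff_set_if_length_less_card:
  assumes "length xs < card S"
  obtains w where "w \<in> S" "w \<notin> set xs"
proof -
  have "\<not> S \<subseteq> set xs"
    using card_mono[of "set xs" S] card_length[of xs] assms by auto
  then show thesis
    using that by blast
qed

definition ico_adj :: "nat \<Rightarrow> nat \<Rightarrow> bool" where
  "ico_adj u v \<longleftrightarrow> {u, v} \<in> ico_edges"

lemma ico_minus_adj_eq: "ico_minus_adj a b = (\<lambda>u v. ico_adj u v \<and> {u, v} \<noteq> {a, b})"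
  by (simp add: fun_eq_iff ico_minus_adj_def ico_adj_def)

lemma ico_adj_sym: "ico_adj u v \<longleftrightarrow> ico_adj v u"
  by (simp add: ico_adj_def insert_commute)

lemma ico_adj_irrefl: "\<not> ico_adj u u"
  by (auto simp: ico_adj_def ico_edges_def doubleton_eq_iff; presburger)

lemma ico_adj_vertices: "ico_adj u v \<Longrightarrow> u \<in> ico_vertices \<and> v \<in> ico_vertices"
  by (auto simp: ico_adj_def ico_edges_def ico_vertices_def doubleton_eq_iff)

lemma ico_vertices_eq_set_upt: "ico_vertices = set [0..<12]"
  by (auto simp: ico_vertices_def)

(* Beyond index 11 the list lookup returns an unspecified value, hence the vertex guards below. *)
definition ico_neighbours :: "nat \<Rightarrow> nat list" where
  "ico_neighbours u =
     [[1,2,3,4,5], [0,2,5,6,7], [0,1,3,7,8], [0,2,4,8,9], [0,3,5,9,10], [0,1,4,6,10],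
      [1,5,7,10,11], [1,2,6,8,11], [2,3,7,9,11], [3,4,8,10,11], [4,5,6,9,11], [6,7,8,9,10]] ! u"

lemma ico_adj_iff_neighbour:
  assumes "u \<in> ico_vertices" "v \<in> ico_vertices"
  shows "ico_adj u v \<longleftrightarrow> v \<in> set (ico_neighbours u)"
proof -
  have "\<forall>u\<in>ico_vertices. \<forall>v\<in>ico_vertices. ico_adj u v \<longleftrightarrow> v \<in> set (ico_neighbours u)"
    unfolding ico_vertices_eq_set_upt ico_adj_def ico_edges_def by code_simp
  then show ?thesis
    using assms by blast
qed

definition ico_common_non_neighbours :: "nat list \<Rightarrow> nat list" where
  "ico_common_non_neighbours xs =
     [v \<leftarrow> [0..<12]. v \<notin> set xs \<and> (\<forall>x\<in>set xs. v \<notin> set (ico_neighbours x))]"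

lemma ico_common_non_neighbours_iff:
  "v \<in> set (ico_common_non_neighbours xs) \<longleftrightarrow>
     v \<in> ico_vertices \<and> v \<notin> set xs \<and> (\<forall>x\<in>set xs. v \<notin> set (ico_neighbours x))"
  by (auto simp: ico_common_non_neighbours_def ico_vertices_eq_set_upt)

lemma independent_diff_subset_ico_common_non_neighbours:
  assumes S: "independent_set ico_vertices ico_adj S" and xs: "set xs \<subseteq> S"
  shows "S - set xs \<subseteq> set (ico_common_non_neighbours xs)"
proof
  fix v
  assume v: "v \<in> S - set xs"
  have "v \<notin> set (ico_neighbours x)" if "x \<in> set xs" for x
  proof -
    have "x \<in> ico_vertices" "v \<in> ico_vertices" "\<not> ico_adj x v"
      using S xs v that unfolding independent_set_def by auto
    then show ?thesis
      by (simp add: ico_adj_iff_neighbour)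
  qed
  then show "v \<in> set (ico_common_non_neighbours xs)"
    using S v unfolding ico_common_non_neighbours_iff independent_set_def by auto
qed

lemma card_ico_independent_set_le_3:
  assumes S: "independent_set ico_vertices ico_adj S"
  shows "card S \<le> 3"
proof (rule ccontr)
  assume "\<not> card S \<le> 3"
  have next_vertex: "\<exists>w\<in>S. w \<in> set (ico_common_non_neighbours xs)"
    if "set xs \<subseteq> S" "length xs \<le> 3" for xs
  proof -
    have "length xs < card S"
      using that(2) \<open>\<not> card S \<le> 3\<close> by simp
    then obtain w where "w \<in> S" "w \<notin> set xs"
      by (rule ex_mem_diff_set_if_length_less_card)
    then show ?thesis
      using independent_diff_subset_ico_common_non_neighbours[OF S that(1)] by blast
  qed
  obtain x where "x \<in> S" "x \<in> ico_vertices"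
    using next_vertex[of "[]"] by (auto simp: ico_common_non_neighbours_iff)
  moreover obtain y where "y \<in> S" "y \<in> set (ico_common_non_neighbours [x])"
    using next_vertex[of "[x]"] \<open>x \<in> S\<close> by auto
  moreover obtain z where "z \<in> S" "z \<in> set (ico_common_non_neighbours [x, y])"
    using next_vertex[of "[x, y]"] \<open>x \<in> S\<close> \<open>y \<in> S\<close> by auto
  moreover obtain w where "w \<in> set (ico_common_non_neighbours [x, y, z])"
    using next_vertex[of "[x, y, z]"] \<open>x \<in> S\<close> \<open>y \<in> S\<close> \<open>z \<in> S\<close> by auto
  moreover have "\<forall>x\<in>ico_vertices. \<forall>y\<in>set (ico_common_non_neighbours [x]).
      \<forall>z\<in>set (ico_common_non_neighbours [x, y]). ico_common_non_neighbours [x, y, z] = []"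
    unfolding ico_vertices_eq_set_upt by code_simp
  ultimately show False
    by force
qed

lemma ico_edge_extends_to_independent_quadruple:
  assumes "ico_adj a b"
  obtains c d where "independent_set ico_vertices (ico_minus_adj a b) {a, b, c, d}"
    and "card {a, b, c, d} = 4"
proof -
  have "a \<in> ico_vertices" "b \<in> ico_vertices"
    using ico_adj_vertices[OF assms] by auto
  moreover have "b \<in> set (ico_neighbours a)"
    using assms calculation by (simp add: ico_adj_iff_neighbour)
  moreover have "\<forall>a\<in>ico_vertices. \<forall>b\<in>set (ico_neighbours a).
      \<exists>c\<in>set (ico_common_non_neighbours [a, b]). ico_common_non_neighbours [a, b, c] \<noteq> []"
    unfolding ico_vertices_eq_set_upt by code_simp
  ultimately obtain c where c: "c \<in> set (ico_common_non_neighbours [a, b])"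
    and "ico_common_non_neighbours [a, b, c] \<noteq> []"
    by blast
  then obtain d where d: "d \<in> set (ico_common_non_neighbours [a, b, c])"
    using list.set_sel(1) by blast
  have vertices: "{a, b, c, d} \<subseteq> ico_vertices"
    using assms c d ico_adj_vertices unfolding ico_common_non_neighbours_iff by auto
  have "\<not> ico_adj a c" "\<not> ico_adj b c" "\<not> ico_adj a d" "\<not> ico_adj b d" "\<not> ico_adj c d"
    using c d vertices unfolding ico_common_non_neighbours_iff
    by (auto simp: ico_adj_iff_neighbour)
  then have "independent_set ico_vertices (ico_minus_adj a b) {a, b, c, d}"
    using vertices unfolding independent_set_def ico_minus_adj_eq
    by (auto simp: ico_adj_irrefl ico_adj_sym)
  moreover have "a \<noteq> b"
    using assms ico_adj_irrefl by blast
  then have "card {a, b, c, d} = 4"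
    using c d unfolding ico_common_non_neighbours_iff by auto
  ultimately show thesis
    using that by blast
qed

theorem lemma3:
  assumes "{a, b} \<in> ico_edges"
  shows "independence_number ico_vertices (ico_minus_adj a b) = 4 \<and>
         (\<forall>S. maximum_independent_set ico_vertices (ico_minus_adj a b) S \<longrightarrow> a \<in> S \<and> b \<in> S)"
proof -
  have "finite ico_vertices"
    by (simp add: ico_vertices_def)
  have bound: "card S \<le> 4 \<and> (card S = 4 \<longrightarrow> a \<in> S \<and> b \<in> S)"
    if "independent_set ico_vertices (ico_minus_adj a b) S" for S
    using card_independent_set_delete_edge[OF \<open>finite ico_vertices\<close>
        card_ico_independent_set_le_3, where a = a and b = b and S = S] that
    by (simp add: ico_minus_adj_eq)
  obtain c d where "independent_set ico_vertices (ico_minus_adj a b) {a, b, c, d}"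
    and "card {a, b, c, d} = 4"
    using assms ico_edge_extends_to_independent_quadruple unfolding ico_adj_def by blast
  then have "independence_number ico_vertices (ico_minus_adj a b) = 4"
    using independence_number_eqI[OF \<open>finite ico_vertices\<close>] bound by metis
  then show ?thesis
    using bound unfolding maximum_independent_set_def by auto
qed

end
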